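(* Let $n,d,c\in\mathbb{N}$ with $d\ge 50$ and $c\in[d]$, let $\mathcal{F}\subseteq 2^{[n]}$ be a hereditary family with $\delta(\mathcal{F})\ge 2^{d-1}-c+1$, let $P$ be an isolated pile of $\mathcal{F}$, and put $\delta=2^{d-1}-c+1$. Then for every $x\in P$, $\omega_{out}(x)\ge \frac{\delta-d_{\mathcal{G}}(x)}{3+\log_2 c}$.
   Context: A family is hereditary if it is closed under taking subsets. $d_{\mathcal{F}}(x)=|\{F\in\mathcal{F}:x\in F\}|$, $\delta(\mathcal{F})=\min_x d_{\mathcal{F}}(x)$, $N(x)=\bigcup_{x\in F\in\mathcal{F}}F$. A set $P\subseteq[n]$ with $|P|=d$ is a pile of $\mathcal{F}$ if $P\subseteq N(y)$ for every $y\in P$, and there exists $z\in P$ with $N(z)=P$; a pile is isolated if it is disjoint from every other pile. Given the pile $P$, let $\mathcal{G}=\{S\subseteq P: S\in\mathcal{F}\}$ and $d_{\mathcal{G}}(x)=|\{S\in\mathcal{G}:x\in S\}|$. For $x\in P$, the external weight is $\omega_{out}(x)=\sum_{x\in S\in\mathcal{F}\setminus\mathcal{G}}\frac{1}{|S|}$. *)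

theory Defs
  imports Complex_Main
begin

definition hereditary :: "nat set set \<Rightarrow> bool" where
  "hereditary \<F> \<longleftrightarrow> (\<forall>F\<in>\<F>. \<forall>S. S \<subseteq> F \<longrightarrow> S \<in> \<F>)"

definition deg :: "nat set set \<Rightarrow> nat \<Rightarrow> nat" where
  "deg \<F> x = card {F\<in>\<F>. x \<in> F}"

definition min_deg :: "nat \<Rightarrow> nat set set \<Rightarrow> nat" where
  "min_deg n \<F> = Min ((deg \<F>) ` {1..n})"

definition nbhd :: "nat set set \<Rightarrow> nat \<Rightarrow> nat set" where
  "nbhd \<F> x = \<Union>{F\<in>\<F>. x \<in> F}"

definition is_pile :: "nat \<Rightarrow> nat \<Rightarrow> nat set set \<Rightarrow> nat set \<Rightarrow> bool" where
  "is_pile n d \<F> P \<longleftrightarrow> P \<subseteq> {1..n} \<and> card P = d \<and>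
     (\<forall>y\<in>P. P \<subseteq> nbhd \<F> y) \<and> (\<exists>z\<in>P. nbhd \<F> z = P)"

definition isolated_pile :: "nat \<Rightarrow> nat \<Rightarrow> nat set set \<Rightarrow> nat set \<Rightarrow> bool" where
  "isolated_pile n d \<F> P \<longleftrightarrow> is_pile n d \<F> P \<and>
     (\<forall>Q. is_pile n d \<F> Q \<and> Q \<noteq> P \<longrightarrow> P \<inter> Q = {})"

definition pile_family :: "nat set set \<Rightarrow> nat set \<Rightarrow> nat set set" where
  "pile_family \<F> P = {S\<in>\<F>. S \<subseteq> P}"

definition omega_out :: "nat set set \<Rightarrow> nat set \<Rightarrow> nat \<Rightarrow> real" where
  "omega_out \<F> P x = (\<Sum>S\<in>{S\<in>\<F> - pile_family \<F> P. x \<in> S}. 1 / real (card S))"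

end

theory Submission
  imports Defs
begin

text \<open>Let \<open>z\<close> be a point of the pile with \<open>N(z) = P\<close>, so that every set of \<open>\<F>\<close> through \<open>z\<close> lies
  in \<open>P\<close>. Counting the subsets of \<open>P\<close> through a point that are missing from \<open>\<F>\<close>, the map
  \<open>S \<mapsto> S \<union> {z}\<close> is at most two-to-one from missing sets through \<open>x\<close> to missing sets through \<open>z\<close>,
  and by the degree condition there are fewer than \<open>c\<close> of the latter. Hence the deficit
  \<open>\<delta> - d\<^sub>\<G>(x)\<close> is below \<open>c\<close>, while it is at most the number of sets of \<open>\<F> \<setminus> \<G>\<close> through \<open>x\<close>.
  These outer sets form a down-set (relative to containing \<open>x\<close> and leaving \<open>P\<close>), so either all of
  them have at most \<open>t + 2\<close> elements, or one of them contains \<open>2\<^sup>t\<close> such sets; with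
  \<open>t = \<lceil>log\<^sub>2 c\<rceil>\<close> either case gives \<open>\<omega>\<^sub>o\<^sub>u\<^sub>t(x) \<ge> (\<delta> - d\<^sub>\<G>(x)) / (t + 2)\<close>.\<close>

lemma card_subsets_containing:
  assumes "finite P" "x \<in> P"
  shows "card {S. S \<subseteq> P \<and> x \<in> S} = 2 ^ (card P - 1)"
proof -
  have "{S. S \<subseteq> P \<and> x \<in> S} = insert x ` Pow (P - {x})"
  proof (intro equalityI subsetI)
    fix S assume "S \<in> {S. S \<subseteq> P \<and> x \<in> S}"
    then have "S = insert x (S - {x})" "S - {x} \<in> Pow (P - {x})"
      by auto
    then show "S \<in> insert x ` Pow (P - {x})"
      by blast
  qed (use assms in auto)
  moreover have "inj_on (insert x) (Pow (P - {x}))"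
    by (rule inj_onI) (metis Diff_insert_absorb PowD subset_Diff_insert)
  ultimately show ?thesis
    using assms by (simp add: card_image card_Pow)
qed

lemma deg_eq_deg_pile_family_plus_outer:
  assumes "finite \<F>"
  shows "deg \<F> x = deg (pile_family \<F> P) x + card {S \<in> \<F> - pile_family \<F> P. x \<in> S}"
proof -
  have "{F \<in> \<F>. x \<in> F} = {S \<in> pile_family \<F> P. x \<in> S} \<union> {S \<in> \<F> - pile_family \<F> P. x \<in> S}"
    and "{S \<in> pile_family \<F> P. x \<in> S} \<inter> {S \<in> \<F> - pile_family \<F> P. x \<in> S} = {}"
    by (auto simp: pile_family_def)
  moreover have "finite {S \<in> pile_family \<F> P. x \<in> S}" "finite {S \<in> \<F> - pile_family \<F> P. x \<in> S}"
    using assms by (simp_all add: pile_family_def)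
  ultimately show ?thesis
    unfolding deg_def by (simp add: card_Un_disjoint)
qed

definition missing_sets :: "nat set set \<Rightarrow> nat set \<Rightarrow> nat \<Rightarrow> nat set set" where
  "missing_sets \<F> P u = {S. S \<subseteq> P \<and> u \<in> S \<and> S \<notin> \<F>}"

lemma deg_pile_family_plus_card_missing:
  assumes "finite P" "u \<in> P"
  shows "deg (pile_family \<F> P) u + card (missing_sets \<F> P u) = 2 ^ (card P - 1)"
proof -
  have "{S. S \<subseteq> P \<and> u \<in> S} = {S \<in> pile_family \<F> P. u \<in> S} \<union> missing_sets \<F> P u"
    and "{S \<in> pile_family \<F> P. u \<in> S} \<inter> missing_sets \<F> P u = {}"
    unfolding missing_sets_def pile_family_def by auto
  moreover have "finite {S. S \<subseteq> P \<and> u \<in> S}"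
    using assms(1) by simp
  ultimately show ?thesis
    unfolding deg_def using card_subsets_containing[OF assms]
    by (metis (no_types, lifting) card_Un_disjoint finite_Un)
qed

lemma card_missing_le_twice_card_missing:
  assumes "hereditary \<F>" "finite P" "z \<in> P"
  shows "card (missing_sets \<F> P x) \<le> 2 * card (missing_sets \<F> P z)"
proof -
  have fin: "finite (missing_sets \<F> P z)"
    using assms(2) unfolding missing_sets_def by simp
  have "missing_sets \<F> P x \<subseteq> (\<Union>B \<in> missing_sets \<F> P z. {B, B - {z}})"
  proof
    fix S assume S: "S \<in> missing_sets \<F> P x"
    then have "insert z S \<in> missing_sets \<F> P z"
      using assms(1,3) unfolding missing_sets_def hereditary_def by blast
    then show "S \<in> (\<Union>B \<in> missing_sets \<F> P z. {B, B - {z}})"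
      by (cases "z \<in> S") (auto simp: insert_absorb)
  qed
  then have "card (missing_sets \<F> P x) \<le> card (\<Union>B \<in> missing_sets \<F> P z. {B, B - {z}})"
    using fin by (intro card_mono) auto
  also have "\<dots> \<le> (\<Sum>B \<in> missing_sets \<F> P z. card {B, B - {z}})"
    by (rule card_UN_le[OF fin])
  also have "\<dots> \<le> (\<Sum>B \<in> missing_sets \<F> P z. 2)"
    by (intro sum_mono) (simp add: card_insert_le_m1)
  finally show ?thesis
    by simp
qed

lemma deg_pile_family_ge_at_centre:
  assumes "hereditary \<F>" "finite P" "x \<in> P" "z \<in> P" "nbhd \<F> z = P"
  shows "2 * deg \<F> z \<le> deg (pile_family \<F> P) x + 2 ^ (card P - 1)"
proof -
  have "{S \<in> pile_family \<F> P. z \<in> S} = {F \<in> \<F>. z \<in> F}"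
    using assms(5) unfolding pile_family_def nbhd_def by auto
  then have "deg (pile_family \<F> P) z = deg \<F> z"
    unfolding deg_def by simp
  then show ?thesis
    using deg_pile_family_plus_card_missing[OF assms(2,3), of \<F>]
      deg_pile_family_plus_card_missing[OF assms(2,4), of \<F>]
      card_missing_le_twice_card_missing[OF assms(1,2,4), of x]
    by linarith
qed

lemma card_div_le_sum_inverse_card:
  assumes "finite \<S>" "\<And>S. S \<in> \<S> \<Longrightarrow> 0 < card S \<and> card S \<le> k"
  shows "real (card \<S>) / real k \<le> (\<Sum>S\<in>\<S>. 1 / real (card S))"
proof -
  have "real (card \<S>) / real k = (\<Sum>S\<in>\<S>. 1 / real k)"
    by simp
  also have "\<dots> \<le> (\<Sum>S\<in>\<S>. 1 / real (card S))"
    using assms(2) by (intro sum_mono) (simp add: frac_le)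
  finally show ?thesis .
qed

lemma exists_small_subsets_through_pair:
  assumes "finite A" "x \<in> A" "y \<in> A" "x \<noteq> y" "t + 2 \<le> card A"
  obtains \<S> where "card \<S> = 2 ^ t"
    and "\<And>S. S \<in> \<S> \<Longrightarrow> S \<subseteq> A \<and> x \<in> S \<and> y \<in> S \<and> card S \<le> t + 2"
proof -
  have "card (A - {x, y}) = card A - 2"
    using assms by (simp add: card_Diff_subset)
  then have "t \<le> card (A - {x, y})"
    using assms(5) by simp
  then obtain W where W: "W \<subseteq> A - {x, y}" "card W = t"
    by (meson obtain_subset_with_card_n)
  have "finite W"
    using W(1) assms(1) finite_subset by blast
  define f where "f B = insert x (insert y B)" for B
  have "inj_on f (Pow W)"
    using W(1) unfolding f_def by (intro inj_onI) (auto simp: set_eq_iff)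
  then have "card (f ` Pow W) = 2 ^ t"
    using \<open>finite W\<close> W(2) by (simp add: card_image card_Pow)
  moreover have "f B \<subseteq> A \<and> x \<in> f B \<and> y \<in> f B \<and> card (f B) \<le> t + 2" if "B \<subseteq> W" for B
  proof -
    have "finite B" "card B \<le> t"
      using that W(2) \<open>finite W\<close> finite_subset card_mono by blast+
    moreover have "x \<notin> B" "y \<notin> B"
      using that W(1) by auto
    ultimately show ?thesis
      using that W(1) assms(2-4) unfolding f_def by auto
  qed
  ultimately show ?thesis
    by (intro that[of "f ` Pow W"]) auto
qed

lemma omega_out_ge_min_card_outer:
  fixes t :: nat
  assumes "hereditary \<F>" "finite \<F>" "\<And>F. F \<in> \<F> \<Longrightarrow> finite F" "x \<in> P"
  shows "min (real (card {S \<in> \<F> - pile_family \<F> P. x \<in> S})) (2 ^ t) / (real t + 2)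
           \<le> omega_out \<F> P x"
proof -
  define T where "T = {S \<in> \<F> - pile_family \<F> P. x \<in> S}"
  have "finite T"
    unfolding T_def using assms(2) by simp
  have T_down: "S' \<in> T" if "S \<in> T" "S' \<subseteq> S" "x \<in> S'" "\<not> S' \<subseteq> P" for S S'
    using that assms(1) unfolding T_def pile_family_def hereditary_def by blast
  have omega: "omega_out \<F> P x = (\<Sum>S\<in>T. 1 / real (card S))"
    unfolding omega_out_def T_def ..
  have card_pos: "0 < card S" if "S \<in> T" for S
    using that assms(3) unfolding T_def by (auto simp: card_gt_0_iff)
  have "min (real (card T)) (2 ^ t) / real (t + 2) \<le> omega_out \<F> P x"
  proof (cases "\<forall>S\<in>T. card S \<le> t + 2")
    case True
    then have "real (card T) / real (t + 2) \<le> omega_out \<F> P x"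
      unfolding omega using \<open>finite T\<close> card_pos by (intro card_div_le_sum_inverse_card) auto
    moreover have "min (real (card T)) (2 ^ t) / real (t + 2) \<le> real (card T) / real (t + 2)"
      by (intro divide_right_mono) auto
    ultimately show ?thesis
      by linarith
  next
    case False
    then obtain S0 where S0: "S0 \<in> T" "t + 2 \<le> card S0"
      by (meson not_le less_imp_le)
    then obtain y where y: "y \<in> S0" "y \<notin> P" "x \<in> S0" "finite S0"
      using assms(3) unfolding T_def pile_family_def by blast
    then obtain \<S> where \<S>: "card \<S> = 2 ^ t"
      "\<And>S. S \<in> \<S> \<Longrightarrow> S \<subseteq> S0 \<and> x \<in> S \<and> y \<in> S \<and> card S \<le> t + 2"
      using exists_small_subsets_through_pair[of S0 x y t] S0(2) assms(4) by blast
    have "\<S> \<subseteq> T"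
      using \<S>(2) T_down[OF S0(1)] y(2) by blast
    have "min (real (card T)) (2 ^ t) / real (t + 2) \<le> 2 ^ t / real (t + 2)"
      by (intro divide_right_mono) auto
    also have "\<dots> \<le> (\<Sum>S\<in>\<S>. 1 / real (card S))"
      using card_div_le_sum_inverse_card[of \<S> "t + 2"] \<S> \<open>\<S> \<subseteq> T\<close> card_pos
        finite_subset[OF \<open>\<S> \<subseteq> T\<close> \<open>finite T\<close>] by auto
    also have "\<dots> \<le> omega_out \<F> P x"
      unfolding omega by (rule sum_mono2[OF \<open>finite T\<close> \<open>\<S> \<subseteq> T\<close>]) simp
    finally show ?thesis .
  qed
  then show ?thesis
    unfolding T_def by (simp add: add.commute)
qed

lemma le_two_power_nat_ceiling_log:
  assumes "1 \<le> r"
  shows "r \<le> 2 ^ nat \<lceil>log 2 r\<rceil>"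
proof -
  have "r = 2 powr log 2 r"
    using assms by simp
  also have "\<dots> \<le> 2 powr real (nat \<lceil>log 2 r\<rceil>)"
    using assms by (intro powr_mono) auto
  finally show ?thesis
    by (simp add: powr_realpow)
qed

lemma nat_ceiling_log_less:
  assumes "1 \<le> r"
  shows "real (nat \<lceil>log 2 r\<rceil>) < log 2 r + 1"
proof -
  have "0 \<le> log 2 r"
    using assms by simp
  then show ?thesis
    by linarith
qed

lemma omega_out_ge_div_log:
  assumes "hereditary \<F>" "finite \<F>" "\<And>F. F \<in> \<F> \<Longrightarrow> finite F" "x \<in> P" "1 \<le> c"
    and "D \<le> real (card {S \<in> \<F> - pile_family \<F> P. x \<in> S})" "D \<le> real c"
  shows "D / (3 + log 2 (real c)) \<le> omega_out \<F> P x"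
proof -
  define t where "t = nat \<lceil>log 2 (real c)\<rceil>"
  have "real c \<le> 2 ^ t"
    unfolding t_def using assms(5) by (intro le_two_power_nat_ceiling_log) simp
  then have "D \<le> 2 ^ t"
    using assms(7) by linarith
  then have "max D 0 \<le> min (real (card {S \<in> \<F> - pile_family \<F> P. x \<in> S})) (2 ^ t)"
    using assms(6) by simp
  then have "max D 0 / (real t + 2)
      \<le> min (real (card {S \<in> \<F> - pile_family \<F> P. x \<in> S})) (2 ^ t) / (real t + 2)"
    by (rule divide_right_mono) simp
  also have "\<dots> \<le> omega_out \<F> P x"
    by (rule omega_out_ge_min_card_outer[OF assms(1-4)])
  finally have "max D 0 / (real t + 2) \<le> omega_out \<F> P x" .
  moreover have "real t + 2 \<le> 3 + log 2 (real c)"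
    unfolding t_def using nat_ceiling_log_less[of "real c"] assms(5) by simp
  then have "D / (3 + log 2 (real c)) \<le> max D 0 / (real t + 2)"
    by (intro order_trans[OF divide_right_mono divide_left_mono]) auto
  ultimately show ?thesis
    by linarith
qed

lemma min_deg_le_deg:
  assumes "y \<in> {1..n}"
  shows "min_deg n \<F> \<le> deg \<F> y"
  unfolding min_deg_def using assms by (intro Min_le) auto

theorem mainTheorem17:
  fixes n d c :: nat and \<F> :: "nat set set" and P :: "nat set"
  assumes "d \<ge> 50" and "c \<in> {1..d}"
    and "\<F> \<subseteq> Pow {1..n}" and "hereditary \<F>"
    and "min_deg n \<F> \<ge> 2^(d-1) - c + 1"
    and "isolated_pile n d \<F> P"
  shows "\<forall>x\<in>P. omega_out \<F> P x \<ge>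
           (real (2^(d-1) - c + 1) - real (deg (pile_family \<F> P) x)) / (3 + log 2 (real c))"
proof
  fix x assume "x \<in> P"
  obtain z where "z \<in> P" "nbhd \<F> z = P" "P \<subseteq> {1..n}" "card P = d"
    using assms(6) unfolding isolated_pile_def is_pile_def by blast
  have "finite P" "finite \<F>" and finite_members: "\<And>F. F \<in> \<F> \<Longrightarrow> finite F"
    using \<open>P \<subseteq> {1..n}\<close> assms(3) by (auto intro: finite_subset)
  have "c \<le> 2 ^ (d - 1)"
    using assms(1,2) less_exp[of "d - 1"] atLeastAtMost_iff[of c 1 d] by linarith
  have deg_ge: "2^(d-1) - c + 1 \<le> deg \<F> y" if "y \<in> P" for y
    using assms(5) min_deg_le_deg[of y n \<F>] that \<open>P \<subseteq> {1..n}\<close> by auto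
  have "2^(d-1) - c + 1 \<le> deg (pile_family \<F> P) x + card {S \<in> \<F> - pile_family \<F> P. x \<in> S}"
    using deg_eq_deg_pile_family_plus_outer[OF \<open>finite \<F>\<close>] deg_ge[OF \<open>x \<in> P\<close>] by simp
  moreover have "2^(d-1) - c + 1 \<le> deg (pile_family \<F> P) x + c"
    using deg_pile_family_ge_at_centre[OF assms(4) \<open>finite P\<close> \<open>x \<in> P\<close> \<open>z \<in> P\<close> \<open>nbhd \<F> z = P\<close>,
        unfolded \<open>card P = d\<close>]
      deg_ge[OF \<open>z \<in> P\<close>] \<open>c \<le> 2 ^ (d - 1)\<close> by linarith
  ultimately show "(real (2^(d-1) - c + 1) - real (deg (pile_family \<F> P) x)) / (3 + log 2 (real c))
      \<le> omega_out \<F> P x"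
    using assms(2)
    by (intro omega_out_ge_div_log[OF assms(4) \<open>finite \<F>\<close> finite_members \<open>x \<in> P\<close>])
      (simp_all add: of_nat_le_iff[symmetric] del: of_nat_le_iff)
qed

end
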